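(* Let $\alpha\ge 0$, let $\mathbf{G}\subset\mathbb{R}^2$ be a ground-truth box (a closed oriented rectangle of positive area not containing the origin) and let $\mathbf{P}\subset\mathbb{R}^2$ be an arbitrary prediction box (a closed oriented rectangle). Then $0 \le \mathsf{EC\text{-}IoU}(\mathbf{P},\mathbf{G}) \le 1$.
   Context: $\rho(x,y)=\sqrt{x^2+y^2}$ is the distance to the origin (the ego position). For a ground-truth box $\mathbf{G}$ with center $(x_{\mathbf{G}},y_{\mathbf{G}})$, define the weight $\omega_{\mathbf{G}}(x,y) = \left[\rho(x_{\mathbf{G}},y_{\mathbf{G}})/\rho(x,y)\right]^{\alpha}$ for $(x,y)\in\mathbf{G}$. For a region $\mathbf{D}\subseteq\mathbf{G}$ let $\mathsf{Weighted\text{-}Area}_{\mathbf{G}}(\mathbf{D}) = \iint_{\mathbf{D}} \omega_{\mathbf{G}}(x,y)\,dA$, and for any region $\mathbf{D}$ let $\mathsf{Area}(\mathbf{D}) = \iint_{\mathbf{D}} 1\,dA$. The Ego-Centric IoU is $$\mathsf{EC\text{-}IoU}(\mathbf{P},\mathbf{G}) = \frac{\mathsf{Weighted\text{-}Area}_{\mathbf{G}}(\mathbf{P}\cap\mathbf{G})}{\mathsf{Weighted\text{-}Area}_{\mathbf{G}}(\mathbf{G}) + \mathsf{Area}(\mathbf{P}) - \mathsf{Area}(\mathbf{P}\cap\mathbf{G})}.$$ *)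

theory Defs
  imports "HOL-Analysis.Analysis"
begin

definition rho :: "real^2 \<Rightarrow> real" where
  "rho v = sqrt ((v$1)^2 + (v$2)^2)"

definition obox :: "real^2 \<Rightarrow> real \<Rightarrow> real \<Rightarrow> real \<Rightarrow> (real^2) set" where
  "obox c a b th =
     {v. \<exists>s t. \<bar>s\<bar> \<le> a \<and> \<bar>t\<bar> \<le> b \<and>
        v = c + vector [s * cos th - t * sin th, s * sin th + t * cos th]}"

definition is_box :: "(real^2) set \<Rightarrow> bool" where
  "is_box B \<longleftrightarrow> (\<exists>c a b th. a \<ge> 0 \<and> b \<ge> 0 \<and> B = obox c a b th)"

definition is_gt_box :: "(real^2) set \<Rightarrow> bool" where
  "is_gt_box B \<longleftrightarrow> (\<exists>c a b th. a > 0 \<and> b > 0 \<and> B = obox c a b th) \<and> 0 \<notin> B"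

definition box_center :: "(real^2) set \<Rightarrow> real^2" where
  "box_center B = (SOME c. \<exists>a b th. a \<ge> 0 \<and> b \<ge> 0 \<and> B = obox c a b th)"

definition ec_weight :: "real \<Rightarrow> (real^2) set \<Rightarrow> real^2 \<Rightarrow> real" where
  "ec_weight \<alpha> G v = (rho (box_center G) / rho v) powr \<alpha>"

definition weighted_area :: "real \<Rightarrow> (real^2) set \<Rightarrow> (real^2) set \<Rightarrow> real" where
  "weighted_area \<alpha> G D = integral D (ec_weight \<alpha> G)"

definition area :: "(real^2) set \<Rightarrow> real" where
  "area D = measure lebesgue D"

definition ec_iou :: "real \<Rightarrow> (real^2) set \<Rightarrow> (real^2) set \<Rightarrow> real" where
  "ec_iou \<alpha> P G =
     weighted_area \<alpha> G (P \<inter> G) / (weighted_area \<alpha> G G + area P - area (P \<inter> G))"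

end

(* The weight is nonnegative and continuous away from the origin, so the weighted area is a
   monotone function of compact regions avoiding the origin.  Hence the numerator lies between
   0 and Weighted-Area(G), while Area(P) - Area(P \<inter> G) \<ge> 0, so the numerator never exceeds
   the denominator. *)

theory Submission
  imports Defs
begin

lemma rho_eq_norm: "rho v = norm v"
  unfolding rho_def norm_vec_def L2_set_def sum_2 by simp

lemma rotated_vector_eq:
  "(vector [s * cos th - t * sin th, s * sin th + t * cos th] :: real^2)
     = s *\<^sub>R vector [cos th, sin th] + t *\<^sub>R vector [- sin th, cos th]"
  by (simp add: vec_eq_iff forall_2)

lemma obox_eq_image:
  "obox c a b th =
     (\<lambda>(s, t). c + s *\<^sub>R vector [cos th, sin th] + t *\<^sub>R vector [- sin th, cos th])
       ` ({-a..a} \<times> {-b..b})"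
  unfolding obox_def rotated_vector_eq by (force simp: abs_le_iff add.assoc)

lemma compact_obox: "compact (obox c a b th)"
  unfolding obox_eq_image
  by (intro compact_continuous_image compact_Times compact_Icc)
     (auto simp: case_prod_unfold intro!: continuous_intros)

lemma compact_box: "is_box B \<Longrightarrow> compact B"
  unfolding is_box_def using compact_obox by auto

lemma compact_gt_box: "is_gt_box B \<Longrightarrow> compact B"
  unfolding is_gt_box_def using compact_obox by auto

lemma ec_weight_nonneg: "0 \<le> ec_weight \<alpha> G v"
  unfolding ec_weight_def by simp

lemma continuous_on_ec_weight:
  assumes "0 \<notin> S"
  shows "continuous_on S (ec_weight \<alpha> G)"
proof (cases "box_center G = 0")
  case True
  then show ?thesis unfolding ec_weight_def rho_eq_norm by simp
next
  case False
  have "rho (box_center G) / rho v \<noteq> 0" if "v \<in> S" for v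
    using False that assms by (auto simp: rho_eq_norm)
  then show ?thesis
    unfolding ec_weight_def rho_eq_norm using assms
    by (intro continuous_intros) auto
qed

lemma ec_weight_integrable_on_compact:
  assumes "compact S" "0 \<notin> S"
  shows "ec_weight \<alpha> G integrable_on S"
  using set_borel_integral_eq_integral(1)[unfolded set_integrable_def,
          OF borel_integrable_compact[OF assms(1) continuous_on_ec_weight[OF assms(2)]]] .

lemma weighted_area_nonneg:
  assumes "compact D" "0 \<notin> D"
  shows "0 \<le> weighted_area \<alpha> G D"
  unfolding weighted_area_def
  by (intro integral_nonneg ec_weight_integrable_on_compact assms ec_weight_nonneg)

lemma weighted_area_mono:
  assumes "D \<subseteq> E" "compact D" "compact E" "0 \<notin> E"
  shows "weighted_area \<alpha> G D \<le> weighted_area \<alpha> G E"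
  unfolding weighted_area_def using assms
  by (intro integral_subset_le ec_weight_integrable_on_compact) (auto simp: ec_weight_nonneg)

lemma area_mono_compact:
  assumes "D \<subseteq> E" "compact D" "compact E"
  shows "area D \<le> area E"
  unfolding area_def using assms
  by (intro measure_mono_fmeasurable) (auto intro: lmeasurable_compact fmeasurableD)

text \<open>A vanishing denominator is harmless because \<open>x / 0 = 0\<close>.\<close>

theorem lemma2:
  fixes \<alpha> :: real and P G :: "(real^2) set"
  assumes "\<alpha> \<ge> 0"
    and "is_gt_box G"
    and "is_box P"
  shows "0 \<le> ec_iou \<alpha> P G \<and> ec_iou \<alpha> P G \<le> 1"
proof -
  have G: "compact G" "0 \<notin> G"
    using assms(2) compact_gt_box is_gt_box_def by auto
  have P: "compact P"
    using assms(3) compact_box by auto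
  have PG: "compact (P \<inter> G)" "0 \<notin> P \<inter> G"
    using G P by auto
  have num_nonneg: "0 \<le> weighted_area \<alpha> G (P \<inter> G)"
    using PG by (rule weighted_area_nonneg)
  have "weighted_area \<alpha> G (P \<inter> G) \<le> weighted_area \<alpha> G G"
    using PG G by (intro weighted_area_mono) auto
  moreover have "area (P \<inter> G) \<le> area P"
    using PG P by (intro area_mono_compact) auto
  ultimately have "weighted_area \<alpha> G (P \<inter> G) \<le> weighted_area \<alpha> G G + area P - area (P \<inter> G)"
    by linarith
  then show ?thesis
    using num_nonneg unfolding ec_iou_def by (auto simp: divide_le_eq_1 divide_nonneg_nonneg)
qed

end
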